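(* Let $\mathcal S$ be an ash on a set $S$, let $\mu:S\to\{2\}$, and let $\mathcal A_{\mathcal S}$ be the set of (isomorphism types of) finite relational structures $\mathfrak A=(A;(R_s)_{s\in S})$ of signature $\mu$ such that for all $x,y,z\in A$ and $s,t\in S$: (1) $\neg R_s(x,x)$; (2) if $R_s(x,y)$ then $R_s(y,x)$; (3) if $R_s(x,y)$ and $R_t(x,y)$ then $s=t$, and if $R_s(x,y)$ and $R_s(x,z)$ then $y=z$; (4) if $x\neq y$ there is $r\in S$ with $R_r(x,y)$; (5) every non-empty subset of $\{r\in S:\exists u\in A\ R_r(x,u)\}$ is an element of $\mathcal S$. Then $\mathcal A_{\mathcal S}$ is an ideal of $\Omega_\mu$.
   Context: An ash on a set $S$ is a set $\mathcal S$ of finite subsets of $S$ such that: (a) $\{s\}\in\mathcal S$ for every $s\in S$; (b) for every finite subset $\mathcal F\subseteq\mathcal S$ there is $s\in S\setminus\bigcup\mathcal F$ with $\{s\}\cup F\in\mathcal S$ for every $F\in\mathcal F$; (c) for every $S'\subseteq S$ with $|S'|=|S|$ there is a finite $F\subseteq S'$ with $F\notin\mathcal S$. A relational structure of signature $\mu:S\to\{2\}$ is a set with a family of binary relations indexed by $S$. $\Omega_\mu$ is the set of isomorphism types of finite such structures, ordered by embeddability (embeddings are injective maps preserving and reflecting all relations). An ideal of $\Omega_\mu$ is a non-empty, downward closed, up-directed subset. *)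

theory Defs
  imports Main "HOL-Library.Equipollence"
begin

definition ash :: "'s set \<Rightarrow> 's set set \<Rightarrow> bool" where
  "ash S \<SS> \<longleftrightarrow>
     (\<forall>F\<in>\<SS>. finite F \<and> F \<subseteq> S) \<and>
     (\<forall>s\<in>S. {s} \<in> \<SS>) \<and>
     (\<forall>\<FF>. finite \<FF> \<and> \<FF> \<subseteq> \<SS> \<longrightarrow>
        (\<exists>s\<in>S - \<Union>\<FF>. \<forall>F\<in>\<FF>. insert s F \<in> \<SS>)) \<and>
     (\<forall>S'. S' \<subseteq> S \<and> S' \<approx> S \<longrightarrow> (\<exists>F. F \<subseteq> S' \<and> finite F \<and> F \<notin> \<SS>))"

text \<open>Isomorphism types are represented by structures whose
  carrier is a finite set of natural numbers (every finite structure is isomorphic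
  to such a one).\<close>
definition fin_struct :: "'s set \<Rightarrow> nat set \<Rightarrow> ('s \<Rightarrow> nat \<Rightarrow> nat \<Rightarrow> bool) \<Rightarrow> bool" where
  "fin_struct S A R \<longleftrightarrow> finite A \<and> (\<forall>s x y. R s x y \<longrightarrow> s \<in> S \<and> x \<in> A \<and> y \<in> A)"

definition embedding :: "'s set \<Rightarrow> (nat \<Rightarrow> nat) \<Rightarrow> nat set \<Rightarrow> ('s \<Rightarrow> nat \<Rightarrow> nat \<Rightarrow> bool)
    \<Rightarrow> nat set \<Rightarrow> ('s \<Rightarrow> nat \<Rightarrow> nat \<Rightarrow> bool) \<Rightarrow> bool" where
  "embedding S f A R B Q \<longleftrightarrow> inj_on f A \<and> f ` A \<subseteq> B \<and>
     (\<forall>s\<in>S. \<forall>x\<in>A. \<forall>y\<in>A. R s x y \<longleftrightarrow> Q s (f x) (f y))"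

definition embeds :: "'s set \<Rightarrow> nat set \<Rightarrow> ('s \<Rightarrow> nat \<Rightarrow> nat \<Rightarrow> bool)
    \<Rightarrow> nat set \<Rightarrow> ('s \<Rightarrow> nat \<Rightarrow> nat \<Rightarrow> bool) \<Rightarrow> bool" where
  "embeds S A R B Q \<longleftrightarrow> (\<exists>f. embedding S f A R B Q)"

text \<open>An ideal of \<Omega>_\<mu> (given as a predicate on representatives): non-empty,
  downward closed, up-directed with respect to embeddability.\<close>
definition is_ideal :: "'s set \<Rightarrow> (nat set \<Rightarrow> ('s \<Rightarrow> nat \<Rightarrow> nat \<Rightarrow> bool) \<Rightarrow> bool) \<Rightarrow> bool" where
  "is_ideal S P \<longleftrightarrow>
     (\<forall>A R. P A R \<longrightarrow> fin_struct S A R) \<and>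
     (\<exists>A R. P A R) \<and>
     (\<forall>A R B Q. P A R \<and> fin_struct S B Q \<and> embeds S B Q A R \<longrightarrow> P B Q) \<and>
     (\<forall>A R B Q. P A R \<and> P B Q \<longrightarrow>
        (\<exists>C T. P C T \<and> embeds S A R C T \<and> embeds S B Q C T))"

definition A_ash :: "'s set \<Rightarrow> 's set set \<Rightarrow> nat set \<Rightarrow> ('s \<Rightarrow> nat \<Rightarrow> nat \<Rightarrow> bool) \<Rightarrow> bool" where
  "A_ash S \<SS> A R \<longleftrightarrow> fin_struct S A R \<and>
     (\<forall>x\<in>A. \<forall>s\<in>S. \<not> R s x x) \<and>
     (\<forall>x\<in>A. \<forall>y\<in>A. \<forall>s\<in>S. R s x y \<longrightarrow> R s y x) \<and>
     (\<forall>x\<in>A. \<forall>y\<in>A. \<forall>s\<in>S. \<forall>t\<in>S. R s x y \<and> R t x y \<longrightarrow> s = t) \<and>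
     (\<forall>x\<in>A. \<forall>y\<in>A. \<forall>z\<in>A. \<forall>s\<in>S. R s x y \<and> R s x z \<longrightarrow> y = z) \<and>
     (\<forall>x\<in>A. \<forall>y\<in>A. x \<noteq> y \<longrightarrow> (\<exists>r\<in>S. R r x y)) \<and>
     (\<forall>x\<in>A. \<forall>F. F \<noteq> {} \<and> F \<subseteq> {r\<in>S. \<exists>u\<in>A. R r x u} \<longrightarrow> F \<in> \<SS>)"

end

theory Submission
  imports Defs
begin

(* Non-emptiness (the empty structure) and downward closure are immediate, so the content is
   joint embedding. Put disjoint copies of the two structures side by side: the union satisfies
   all conditions except (4). Then join the unrelated pairs one at a time; a pair x, y gets a
   colour s that is new at both x and y and such that adding s to any non-empty set of colours
   already present at x or at y stays in the ash. Such an s exists by condition (b), applied to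
   the finitely many non-empty sets of colours at x and at y. Each copy is already total, so no
   new edge lies inside a copy, and both copies embed into the completion by the identity. *)

definition subsets_in :: "'s set set \<Rightarrow> 's set \<Rightarrow> bool" where
  "subsets_in \<SS> X \<longleftrightarrow> (\<forall>F. F \<noteq> {} \<and> F \<subseteq> X \<longrightarrow> F \<in> \<SS>)"

lemma subsets_in_mono: "subsets_in \<SS> X \<Longrightarrow> Y \<subseteq> X \<Longrightarrow> subsets_in \<SS> Y"
  unfolding subsets_in_def by blast

lemma ash_finite: "ash S \<SS> \<Longrightarrow> F \<in> \<SS> \<Longrightarrow> finite F"
  unfolding ash_def by (elim conjE) simp

lemma ash_singleton: "ash S \<SS> \<Longrightarrow> s \<in> S \<Longrightarrow> {s} \<in> \<SS>"
  unfolding ash_def by (elim conjE) simp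

lemma ash_common_extension:
  "ash S \<SS> \<Longrightarrow> finite \<FF> \<Longrightarrow> \<FF> \<subseteq> \<SS> \<Longrightarrow> \<exists>s\<in>S - \<Union>\<FF>. \<forall>F\<in>\<FF>. insert s F \<in> \<SS>"
  unfolding ash_def by (elim conjE) simp

lemma ash_subsets_in_finite:
  assumes "ash S \<SS>" "subsets_in \<SS> X"
  shows "finite X"
  using assms ash_finite unfolding subsets_in_def by (cases "X = {}") auto

lemma ash_fresh_insert:
  assumes ash: "ash S \<SS>" and "finite \<X>" and \<X>: "\<And>X. X \<in> \<X> \<Longrightarrow> subsets_in \<SS> X"
  shows "\<exists>s\<in>S - \<Union>\<X>. \<forall>X\<in>\<X>. subsets_in \<SS> (insert s X)"
proof -
  define \<FF> where "\<FF> = (\<Union>X\<in>\<X>. {F. F \<noteq> {} \<and> F \<subseteq> X})"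
  have "finite \<FF>"
    unfolding \<FF>_def using \<open>finite \<X>\<close> ash_subsets_in_finite[OF ash \<X>] by simp
  moreover have "\<FF> \<subseteq> \<SS>" using \<X> unfolding \<FF>_def subsets_in_def by blast
  ultimately obtain s where s: "s \<in> S - \<Union>\<FF>" and ins: "\<And>F. F \<in> \<FF> \<Longrightarrow> insert s F \<in> \<SS>"
    using ash_common_extension[OF ash] by meson
  have "\<Union>\<FF> = \<Union>\<X>" unfolding \<FF>_def by blast
  moreover have "subsets_in \<SS> (insert s X)" if X: "X \<in> \<X>" for X
    unfolding subsets_in_def
  proof (intro allI impI, elim conjE)
    fix F assume "F \<noteq> {}" "F \<subseteq> insert s X"
    consider "s \<notin> F" | "F = {s}" | "s \<in> F" "F - {s} \<in> \<FF>"
    proof (cases "s \<in> F \<and> F \<noteq> {s}")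
      case True
      then have "F - {s} \<in> \<FF>"
        using \<open>F \<subseteq> insert s X\<close> X unfolding \<FF>_def by blast
      then show ?thesis using True that by blast
    qed (use \<open>F \<noteq> {}\<close> in blast)
    then show "F \<in> \<SS>"
    proof cases
      case 1
      then show ?thesis using \<X>[OF X] \<open>F \<noteq> {}\<close> \<open>F \<subseteq> insert s X\<close>
        unfolding subsets_in_def by blast
    next
      case 2
      then show ?thesis using ash_singleton[OF ash] s by simp
    next
      case 3
      then show ?thesis using ins[of "F - {s}"] by (simp add: insert_absorb)
    qed
  qed
  ultimately show ?thesis using s by blast
qed

definition colours :: "'s set \<Rightarrow> nat set \<Rightarrow> ('s \<Rightarrow> nat \<Rightarrow> nat \<Rightarrow> bool) \<Rightarrow> nat \<Rightarrow> 's set" where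
  "colours S A R x = {r\<in>S. \<exists>u\<in>A. R r x u}"

definition non_edges :: "'s set \<Rightarrow> nat set \<Rightarrow> ('s \<Rightarrow> nat \<Rightarrow> nat \<Rightarrow> bool) \<Rightarrow> (nat \<times> nat) set" where
  "non_edges S A R = {(x, y) \<in> A \<times> A. x \<noteq> y \<and> \<not> (\<exists>r\<in>S. R r x y)}"

definition partial_A_ash :: "'s set \<Rightarrow> 's set set \<Rightarrow> nat set \<Rightarrow> ('s \<Rightarrow> nat \<Rightarrow> nat \<Rightarrow> bool) \<Rightarrow> bool" where
  "partial_A_ash S \<SS> A R \<longleftrightarrow> fin_struct S A R \<and>
     (\<forall>x\<in>A. \<forall>s\<in>S. \<not> R s x x) \<and>
     (\<forall>x\<in>A. \<forall>y\<in>A. \<forall>s\<in>S. R s x y \<longrightarrow> R s y x) \<and>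
     (\<forall>x\<in>A. \<forall>y\<in>A. \<forall>s\<in>S. \<forall>t\<in>S. R s x y \<and> R t x y \<longrightarrow> s = t) \<and>
     (\<forall>x\<in>A. \<forall>y\<in>A. \<forall>z\<in>A. \<forall>s\<in>S. R s x y \<and> R s x z \<longrightarrow> y = z) \<and>
     (\<forall>x\<in>A. subsets_in \<SS> (colours S A R x))"

lemma A_ash_iff_partial_A_ash:
  "A_ash S \<SS> A R \<longleftrightarrow> partial_A_ash S \<SS> A R \<and> non_edges S A R = {}"
proof -
  have "non_edges S A R = {} \<longleftrightarrow> (\<forall>x\<in>A. \<forall>y\<in>A. x \<noteq> y \<longrightarrow> (\<exists>r\<in>S. R r x y))"
    unfolding non_edges_def by blast
  then show ?thesis
    unfolding A_ash_def partial_A_ash_def subsets_in_def colours_def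
    by (intro iffI; elim conjE; intro conjI; simp only:)
qed

lemma partial_A_ashD:
  assumes "partial_A_ash S \<SS> A R"
  shows "finite A" and "R s x y \<Longrightarrow> s \<in> S \<and> x \<in> A \<and> y \<in> A"
    and "\<not> R s x x" and "R s x y \<Longrightarrow> R s y x"
    and "R s x y \<Longrightarrow> R t x y \<Longrightarrow> s = t" and "R s x y \<Longrightarrow> R s x z \<Longrightarrow> y = z"
    and "x \<in> A \<Longrightarrow> subsets_in \<SS> (colours S A R x)"
proof -
  obtain fs: "fin_struct S A R" and
     irrefl: "\<forall>x\<in>A. \<forall>s\<in>S. \<not> R s x x" and
     sym: "\<forall>x\<in>A. \<forall>y\<in>A. \<forall>s\<in>S. R s x y \<longrightarrow> R s y x" and
     colour_unique: "\<forall>x\<in>A. \<forall>y\<in>A. \<forall>s\<in>S. \<forall>t\<in>S. R s x y \<and> R t x y \<longrightarrow> s = t" and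
     matching: "\<forall>x\<in>A. \<forall>y\<in>A. \<forall>z\<in>A. \<forall>s\<in>S. R s x y \<and> R s x z \<longrightarrow> y = z" and
     colours: "\<forall>x\<in>A. subsets_in \<SS> (colours S A R x)"
    using assms unfolding partial_A_ash_def by (elim conjE)
  have rel: "\<And>s x y. R s x y \<Longrightarrow> s \<in> S \<and> x \<in> A \<and> y \<in> A"
    using fs unfolding fin_struct_def by simp
  show "finite A" using fs unfolding fin_struct_def by simp
  show "R s x y \<Longrightarrow> s \<in> S \<and> x \<in> A \<and> y \<in> A" by (rule rel)
  show "\<not> R s x x" using irrefl rel by blast
  show "R s x y \<Longrightarrow> R s y x" using sym rel by blast
  show "R s x y \<Longrightarrow> R t x y \<Longrightarrow> s = t" using colour_unique rel by blast
  show "R s x y \<Longrightarrow> R s x z \<Longrightarrow> y = z" using matching rel by blast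
  show "x \<in> A \<Longrightarrow> subsets_in \<SS> (colours S A R x)" using colours by blast
qed

lemma partial_A_ashI:
  assumes "finite A" and "\<And>s x y. R s x y \<Longrightarrow> s \<in> S \<and> x \<in> A \<and> y \<in> A"
    and "\<And>s x. \<not> R s x x" and "\<And>s x y. R s x y \<Longrightarrow> R s y x"
    and "\<And>s t x y. R s x y \<Longrightarrow> R t x y \<Longrightarrow> s = t" and "\<And>s x y z. R s x y \<Longrightarrow> R s x z \<Longrightarrow> y = z"
    and "\<And>x. x \<in> A \<Longrightarrow> subsets_in \<SS> (colours S A R x)"
  shows "partial_A_ash S \<SS> A R"
  unfolding partial_A_ash_def fin_struct_def using assms by meson

lemma partial_A_ash_add_edge:
  assumes ash: "ash S \<SS>" and P: "partial_A_ash S \<SS> C T"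
    and xy: "(x, y) \<in> non_edges S C T"
  shows "\<exists>s\<in>S. partial_A_ash S \<SS> C (\<lambda>r u v. T r u v \<or> r = s \<and> (u = x \<and> v = y \<or> u = y \<and> v = x))"
    (is "\<exists>s\<in>S. partial_A_ash S \<SS> C (?T s)")
proof -
  note T = partial_A_ashD[OF P]
  have "x \<in> C" "y \<in> C" "x \<noteq> y" and unrelated: "\<And>r. \<not> T r x y" "\<And>r. \<not> T r y x"
    using xy T(2,4) unfolding non_edges_def by blast+
  obtain s where "s \<in> S" and fresh: "s \<notin> colours S C T x" "s \<notin> colours S C T y"
    and ext: "subsets_in \<SS> (insert s (colours S C T x))" "subsets_in \<SS> (insert s (colours S C T y))"
    using ash_fresh_insert[OF ash, of "{colours S C T x, colours S C T y}"]
      T(7) \<open>x \<in> C\<close> \<open>y \<in> C\<close> by auto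
  have s_unused: "\<And>u. \<not> T s x u" "\<And>u. \<not> T s y u"
    using fresh \<open>s \<in> S\<close> T(2) unfolding colours_def by blast+
  have colours_new: "colours S C (?T s) u \<subseteq> insert s (colours S C T u)" for u
    unfolding colours_def by blast
  have colours_old: "colours S C (?T s) u \<subseteq> colours S C T u" if "u \<noteq> x" "u \<noteq> y" for u
    using that unfolding colours_def by blast
  have "partial_A_ash S \<SS> C (?T s)"
  proof (rule partial_A_ashI)
    fix u assume "u \<in> C"
    show "subsets_in \<SS> (colours S C (?T s) u)"
    proof (cases "u = x \<or> u = y")
      case True
      then show ?thesis using ext subsets_in_mono[OF _ colours_new] by blast
    next
      case False
      then show ?thesis using T(7)[OF \<open>u \<in> C\<close>] subsets_in_mono[OF _ colours_old] by blast
    qed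
  qed (use T(1-6) unrelated s_unused \<open>s \<in> S\<close> \<open>x \<in> C\<close> \<open>y \<in> C\<close> \<open>x \<noteq> y\<close> in metis)+
  then show ?thesis using \<open>s \<in> S\<close> by blast
qed

lemma partial_A_ash_completion:
  assumes ash: "ash S \<SS>" and "partial_A_ash S \<SS> C T"
  shows "\<exists>T'. A_ash S \<SS> C T' \<and> (\<forall>r u v. T r u v \<longrightarrow> T' r u v)"
  using assms(2)
proof (induction "card (non_edges S C T)" arbitrary: T rule: less_induct)
  case less
  show ?case
  proof (cases "non_edges S C T = {}")
    case True
    then show ?thesis using less.prems A_ash_iff_partial_A_ash by blast
  next
    case False
    then obtain x y where xy: "(x, y) \<in> non_edges S C T" by auto
    then obtain s where "s \<in> S" and P1: "partial_A_ash S \<SS> C (\<lambda>r u v. T r u v \<or> r = s \<and> (u = x \<and> v = y \<or> u = y \<and> v = x))"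
      (is "partial_A_ash S \<SS> C ?T1")
      using partial_A_ash_add_edge[OF ash less.prems] by blast
    have "(x, y) \<notin> non_edges S C ?T1" using \<open>s \<in> S\<close> unfolding non_edges_def by blast
    then have "non_edges S C ?T1 \<subset> non_edges S C T"
      using xy unfolding non_edges_def by blast
    moreover have "finite (non_edges S C T)"
      using partial_A_ashD(1)[OF less.prems] unfolding non_edges_def
      by (auto intro: finite_subset[of _ "C \<times> C"])
    ultimately have "card (non_edges S C ?T1) < card (non_edges S C T)"
      by (rule psubset_card_mono[rotated])
    then obtain T' where "A_ash S \<SS> C T'" "\<forall>r u v. ?T1 r u v \<longrightarrow> T' r u v"
      using less.hyps P1 by blast
    then show ?thesis by auto
  qed
qed

lemma A_ash_embedding_closed:
  assumes A: "A_ash S \<SS> A R" and "fin_struct S B Q" and f: "embedding S f B Q A R"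
  shows "A_ash S \<SS> B Q"
proof -
  have PA: "partial_A_ash S \<SS> A R" and total: "non_edges S A R = {}"
    using A A_ash_iff_partial_A_ash by blast+
  note R = partial_A_ashD[OF PA]
  have "inj_on f B" and fB: "\<And>x. x \<in> B \<Longrightarrow> f x \<in> A"
    using f unfolding embedding_def by auto
  have Q_iff: "Q s x y \<longleftrightarrow> s \<in> S \<and> x \<in> B \<and> y \<in> B \<and> R s (f x) (f y)" for s x y
    using f \<open>fin_struct S B Q\<close> unfolding embedding_def fin_struct_def by blast
  have "partial_A_ash S \<SS> B Q"
  proof (rule partial_A_ashI)
    fix x assume "x \<in> B"
    have "colours S B Q x \<subseteq> colours S A R (f x)"
      using fB unfolding colours_def Q_iff by blast
    then show "subsets_in \<SS> (colours S B Q x)"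
      using R(7)[OF fB[OF \<open>x \<in> B\<close>]] subsets_in_mono by blast
  next
    fix s x y z assume "Q s x y" "Q s x z"
    then show "y = z" using R(6) \<open>inj_on f B\<close> unfolding Q_iff inj_on_def by blast
  qed (use \<open>fin_struct S B Q\<close> R(3-5) in \<open>auto simp: fin_struct_def Q_iff\<close>)
  moreover have "non_edges S B Q = {}"
  proof -
    have "(f x, f y) \<notin> non_edges S A R" for x y using total by blast
    then show ?thesis
      using fB \<open>inj_on f B\<close> unfolding non_edges_def Q_iff inj_on_def by blast
  qed
  ultimately show ?thesis using A_ash_iff_partial_A_ash by blast
qed

lemma partial_A_ash_disjoint_union:
  assumes PA: "partial_A_ash S \<SS> A R" and PB: "partial_A_ash S \<SS> B Q" and "A \<inter> B = {}"
  shows "partial_A_ash S \<SS> (A \<union> B) (\<lambda>r u v. R r u v \<or> Q r u v)"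
    (is "partial_A_ash S \<SS> (A \<union> B) ?RQ")
proof -
  note R = partial_A_ashD[OF PA] and Q = partial_A_ashD[OF PB]
  have apart: "\<not> (R s x y \<and> Q t x z)" for s t x y z
    using R(2) Q(2) \<open>A \<inter> B = {}\<close> by blast
  show ?thesis
  proof (rule partial_A_ashI)
    show "finite (A \<union> B)" using R(1) Q(1) by simp
  next
    show "R s x y \<or> Q s x y \<Longrightarrow> s \<in> S \<and> x \<in> A \<union> B \<and> y \<in> A \<union> B" for s x y
      using R(2) Q(2) by blast
    show "\<not> (R s x x \<or> Q s x x)" for s x using R(3) Q(3) by blast
    show "R s x y \<or> Q s x y \<Longrightarrow> R s y x \<or> Q s y x" for s x y using R(4) Q(4) by blast
    show "R s x y \<or> Q s x y \<Longrightarrow> R t x y \<or> Q t x y \<Longrightarrow> s = t" for s t x y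
      using R(5) Q(5) apart by metis
    show "R s x y \<or> Q s x y \<Longrightarrow> R s x z \<or> Q s x z \<Longrightarrow> y = z" for s x y z
      using R(6) Q(6) apart by metis
  next
    fix x assume "x \<in> A \<union> B"
    then consider "x \<in> A" | "x \<in> B" by blast
    then show "subsets_in \<SS> (colours S (A \<union> B) ?RQ x)"
    proof cases
      case 1
      then have "x \<notin> B" using \<open>A \<inter> B = {}\<close> by blast
      then have "colours S (A \<union> B) ?RQ x \<subseteq> colours S A R x"
        using R(2) Q(2) unfolding colours_def by blast
      then show ?thesis using R(7)[OF 1] subsets_in_mono by blast
    next
      case 2
      then have "x \<notin> A" using \<open>A \<inter> B = {}\<close> by blast
      then have "colours S (A \<union> B) ?RQ x \<subseteq> colours S B Q x"
        using R(2) Q(2) unfolding colours_def by blast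
      then show ?thesis using Q(7)[OF 2] subsets_in_mono by blast
    qed
  qed
qed

lemma embedding_comp:
  "embedding S f A R B Q \<Longrightarrow> embedding S g B Q C T \<Longrightarrow> embedding S (g \<circ> f) A R C T"
  unfolding embedding_def inj_on_def by (auto simp: image_subset_iff)

lemma embedding_id_into_extension:
  assumes A: "A_ash S \<SS> A R" and C: "partial_A_ash S \<SS> C T" and "A \<subseteq> C"
    and extends: "\<And>r u v. R r u v \<Longrightarrow> T r u v"
  shows "embedding S id A R C T"
  unfolding embedding_def
proof (intro conjI ballI)
  show "inj_on id A" and "id ` A \<subseteq> C" using \<open>A \<subseteq> C\<close> by auto
  fix s x y assume "s \<in> S" "x \<in> A" "y \<in> A"
  show "R s x y \<longleftrightarrow> T s (id x) (id y)"
  proof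
    assume "T s (id x) (id y)"
    then have "x \<noteq> y" using partial_A_ashD(3)[OF C] by auto
    then obtain r where "R r x y"
      using A \<open>x \<in> A\<close> \<open>y \<in> A\<close> unfolding A_ash_iff_partial_A_ash non_edges_def by blast
    moreover have "r = s"
      using partial_A_ashD(5)[OF C] extends[OF \<open>R r x y\<close>] \<open>T s (id x) (id y)\<close> by simp
    ultimately show "R s x y" by simp
  qed (simp add: extends)
qed

lemma A_ash_joint_embedding:
  assumes ash: "ash S \<SS>" and A: "A_ash S \<SS> A R" and B: "A_ash S \<SS> B Q"
  shows "\<exists>C T. A_ash S \<SS> C T \<and> embeds S A R C T \<and> embeds S B Q C T"
proof -
  have PA: "partial_A_ash S \<SS> A R" and PB: "partial_A_ash S \<SS> B Q"
    using A B A_ash_iff_partial_A_ash by blast+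
  obtain m where "A \<subseteq> {..<m}" using finite_nat_bounded partial_A_ashD(1)[OF PA] by blast
  define B' where "B' = (\<lambda>b. b + m) ` B"
  define Q' where "Q' r u v \<longleftrightarrow> m \<le> u \<and> m \<le> v \<and> Q r (u - m) (v - m)" for r u v
  have shift: "embedding S (\<lambda>b. b + m) B Q B' Q'"
    unfolding embedding_def B'_def Q'_def inj_on_def by auto
  have unshift: "embedding S (\<lambda>u. u - m) B' Q' B Q"
    unfolding embedding_def B'_def Q'_def inj_on_def by auto
  have "Q' r u v \<Longrightarrow> r \<in> S \<and> u \<in> B' \<and> v \<in> B'" for r u v
    using partial_A_ashD(2)[OF PB] unfolding Q'_def B'_def by (metis image_eqI le_add_diff_inverse2)
  then have "fin_struct S B' Q'"
    using partial_A_ashD(1)[OF PB] unfolding fin_struct_def B'_def by blast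
  then have "A_ash S \<SS> B' Q'" using A_ash_embedding_closed[OF B _ unshift] by blast
  then have PB': "partial_A_ash S \<SS> B' Q'" using A_ash_iff_partial_A_ash by blast
  have "A \<inter> B' = {}" using \<open>A \<subseteq> {..<m}\<close> unfolding B'_def by auto
  then obtain T where T: "A_ash S \<SS> (A \<union> B') T" and extends: "\<forall>r u v. R r u v \<or> Q' r u v \<longrightarrow> T r u v"
    using partial_A_ash_completion[OF ash partial_A_ash_disjoint_union[OF PA PB']] by blast
  then have PT: "partial_A_ash S \<SS> (A \<union> B') T" using A_ash_iff_partial_A_ash by blast
  have "embedding S id A R (A \<union> B') T"
    by (rule embedding_id_into_extension[OF A PT]) (use extends in auto)
  moreover have "embedding S id B' Q' (A \<union> B') T"
    by (rule embedding_id_into_extension[OF \<open>A_ash S \<SS> B' Q'\<close> PT]) (use extends in auto)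
  then have "embedding S (id \<circ> (\<lambda>b. b + m)) B Q (A \<union> B') T"
    by (rule embedding_comp[OF shift])
  ultimately show ?thesis using T unfolding embeds_def by blast
qed

theorem lemma5:
  fixes S :: "'s set" and \<SS> :: "'s set set"
  assumes "ash S \<SS>"
  shows "is_ideal S (A_ash S \<SS>)"
  unfolding is_ideal_def
proof (intro conjI allI impI)
  show "A_ash S \<SS> A R \<Longrightarrow> fin_struct S A R" for A R
    unfolding A_ash_def by simp
  have "A_ash S \<SS> {} (\<lambda>_ _ _. False)"
    unfolding A_ash_def fin_struct_def by simp
  then show "\<exists>A R. A_ash S \<SS> A R" by blast
  show "A_ash S \<SS> A R \<and> fin_struct S B Q \<and> embeds S B Q A R \<Longrightarrow> A_ash S \<SS> B Q" for A R B Q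
    using A_ash_embedding_closed unfolding embeds_def by blast
  show "A_ash S \<SS> A R \<and> A_ash S \<SS> B Q \<Longrightarrow> \<exists>C T. A_ash S \<SS> C T \<and> embeds S A R C T \<and> embeds S B Q C T"
    for A R B Q
    using A_ash_joint_embedding[OF assms] by blast
qed

end
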